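(* Let $\phi_1,\phi_2,\phi_3\in\mathbb{R}$ satisfy $\phi_i-\phi_j\neq 2n\pi$ for all $i\neq j$ and all integers $n$, and fix $0<R<1$. For $A>0$ and $(b_1,b_2)\in\mathbb{R}^2$ with $b_1^2+b_2^2\le R$, define $$K(b_1,b_2;\phi)=\frac{1}{\left[(b_1-\cos\phi)^2+(b_2-\sin\phi)^2\right]^2}$$ and the data map $$\mathcal{A}(A,b_1,b_2)=\big(A\,K(b_1,b_2;\phi_1),\;A\,K(b_1,b_2;\phi_2),\;A\,K(b_1,b_2;\phi_3)\big).$$ Then the parameters $(A,b_1,b_2)$ (the area and center of the anomaly) are uniquely determined by the data $\mathcal{A}(A,b_1,b_2)$; that is, $\mathcal{A}$ is injective on $\{(A,b_1,b_2): A>0,\ b_1^2+b_2^2\le R\}$.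
   Context: Setting: a small (elliptical) conductivity anomaly of area $A$ centered at $(b_1,b_2)$ inside the unit disc, with small conductivity contrast against a constant background. Under linearization and to leading order in the anomaly size, the measurement (tangential derivative of the perturbation potential) produced by a boundary dipole placed at $(\cos\phi,\sin\phi)$ equals $A\,K(b_1,b_2;\phi)$, where $K(b_1,b_2;\phi)=|\nabla U_0(b_1,b_2)|^2$ with $U_0$ the dipole potential; measurements are taken at three angles $\phi_1,\phi_2,\phi_3$. *)

theory Defs
  imports Complex_Main
begin

definition Kfun :: "real \<Rightarrow> real \<Rightarrow> real \<Rightarrow> real" where
  "Kfun b1 b2 \<phi> = 1 / ((b1 - cos \<phi>)\<^sup>2 + (b2 - sin \<phi>)\<^sup>2)\<^sup>2"

definition data_map :: "real \<Rightarrow> real \<Rightarrow> real \<Rightarrow> real \<Rightarrow> real \<Rightarrow> real \<Rightarrow> real \<times> real \<times> real" where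
  "data_map \<phi>1 \<phi>2 \<phi>3 A b1 b2 = (A * Kfun b1 b2 \<phi>1, A * Kfun b1 b2 \<phi>2, A * Kfun b1 b2 \<phi>3)"

end

theory Submission
  imports Defs
begin

text \<open>Writing \<open>D(b,\<phi>)\<close> for the squared distance from \<open>b\<close> to the boundary point \<open>(cos \<phi>, sin \<phi>)\<close>,
  equal data give \<open>D(b',\<phi>\<^sub>i) = c D(b,\<phi>\<^sub>i)\<close> with the single constant \<open>c = sqrt (A'/A)\<close>.
  On the unit circle \<open>D(b',u) - c D(b,u)\<close> is an affine function of \<open>u\<close>; vanishing at three
  distinct points of the circle, its linear part vanishes, so \<open>b' = c b\<close>, and its constant
  part vanishes, so \<open>(c - 1)(c |b|\<^sup>2 - 1) = 0\<close>. The second factor would force \<open>|b'|\<^sup>2 = c > 1\<close>,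
  hence \<open>c = 1\<close>.\<close>

definition sqdist_boundary :: "real \<Rightarrow> real \<Rightarrow> real \<Rightarrow> real" where
  "sqdist_boundary b1 b2 \<phi> = (b1 - cos \<phi>)\<^sup>2 + (b2 - sin \<phi>)\<^sup>2"

lemma Kfun_sqdist_boundary: "Kfun b1 b2 \<phi> = 1 / (sqdist_boundary b1 b2 \<phi>)\<^sup>2"
  by (simp add: Kfun_def sqdist_boundary_def)

lemma sqdist_boundary_expand:
  "sqdist_boundary b1 b2 \<phi> = b1\<^sup>2 + b2\<^sup>2 + 1 - 2 * (b1 * cos \<phi> + b2 * sin \<phi>)"
proof -
  have "sqdist_boundary b1 b2 \<phi> = b1\<^sup>2 + b2\<^sup>2 + ((sin \<phi>)\<^sup>2 + (cos \<phi>)\<^sup>2) - 2 * (b1 * cos \<phi> + b2 * sin \<phi>)"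
    by (simp add: sqdist_boundary_def power2_diff algebra_simps)
  then show ?thesis by simp
qed

lemma sqdist_boundary_pos:
  assumes "b1\<^sup>2 + b2\<^sup>2 < 1"
  shows "sqdist_boundary b1 b2 \<phi> > 0"
proof -
  have "(b1, b2) \<noteq> (cos \<phi>, sin \<phi>)"
    using assms by auto
  then show ?thesis
    by (auto simp: sqdist_boundary_def sum_power2_gt_zero_iff)
qed

lemma data_eq_imp_sqdist_boundary_proportional:
  assumes "A > 0" "A' > 0" "b1\<^sup>2 + b2\<^sup>2 < 1" "b1'\<^sup>2 + b2'\<^sup>2 < 1"
    and "A * Kfun b1 b2 \<phi> = A' * Kfun b1' b2' \<phi>"
  shows "sqdist_boundary b1' b2' \<phi> = sqrt (A' / A) * sqdist_boundary b1 b2 \<phi>"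
proof -
  define d d' where "d = sqdist_boundary b1 b2 \<phi>" and "d' = sqdist_boundary b1' b2' \<phi>"
  have "d > 0" "d' > 0"
    using assms(3,4) sqdist_boundary_pos unfolding d_def d'_def by blast+
  with assms(1,5) have "d'\<^sup>2 = (A' / A) * d\<^sup>2"
    by (simp add: Kfun_sqdist_boundary d_def d'_def field_simps)
  then have "d' = sqrt (A' / A * d\<^sup>2)"
    using \<open>d' > 0\<close> by (metis less_imp_le real_sqrt_unique)
  with \<open>d > 0\<close> show ?thesis
    unfolding real_sqrt_mult d_def[symmetric] d'_def[symmetric] by simp
qed

lemma sqdist_boundary_proportional_imp_line:
  assumes "sqdist_boundary b1' b2' \<phi> = c * sqdist_boundary b1 b2 \<phi>"
  shows "(b1' - c * b1) * cos \<phi> + (b2' - c * b2) * sin \<phi>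
           = ((b1'\<^sup>2 + b2'\<^sup>2 + 1) - c * (b1\<^sup>2 + b2\<^sup>2 + 1)) / 2"
  using assms unfolding sqdist_boundary_expand by (simp add: algebra_simps)

text \<open>With \<open>w \<noteq> 0\<close>, a point \<open>u\<close> of the unit circle is determined by \<open>w \<bullet> u\<close> and \<open>w \<times> u\<close>, and
  \<open>(w \<bullet> u)\<^sup>2 + (w \<times> u)\<^sup>2 = |w|\<^sup>2\<close>; on the line \<open>w \<bullet> u = t\<close> this leaves only the two values \<open>\<plusminus>\<close> for \<open>w \<times> u\<close>.\<close>

lemma unit_circle_line_three_points:
  fixes x1 y1 x2 y2 x3 y3 w1 w2 t :: real
  assumes on_circle: "x1\<^sup>2 + y1\<^sup>2 = 1" "x2\<^sup>2 + y2\<^sup>2 = 1" "x3\<^sup>2 + y3\<^sup>2 = 1"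
    and on_line: "w1 * x1 + w2 * y1 = t" "w1 * x2 + w2 * y2 = t" "w1 * x3 + w2 * y3 = t"
    and distinct: "(x1, y1) \<noteq> (x2, y2)" "(x1, y1) \<noteq> (x3, y3)" "(x2, y2) \<noteq> (x3, y3)"
  shows "w1 = 0 \<and> w2 = 0"
proof (rule ccontr)
  assume "\<not> (w1 = 0 \<and> w2 = 0)"
  then have w_pos: "w1\<^sup>2 + w2\<^sup>2 > 0"
    by (simp add: sum_power2_gt_zero_iff)
  define cross where "cross x y = w1 * y - w2 * x" for x y :: real
  have cross_sq: "(cross x y)\<^sup>2 = w1\<^sup>2 + w2\<^sup>2 - t\<^sup>2" if "x\<^sup>2 + y\<^sup>2 = 1" "w1 * x + w2 * y = t" for x y
  proof -
    have "(w1 * x + w2 * y)\<^sup>2 + (cross x y)\<^sup>2 = (w1\<^sup>2 + w2\<^sup>2) * (x\<^sup>2 + y\<^sup>2)"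
      unfolding cross_def by algebra
    with that show ?thesis by simp
  qed
  have cross_inj: "cross x y \<noteq> cross x' y'"
    if "w1 * x + w2 * y = t" "w1 * x' + w2 * y' = t" "(x, y) \<noteq> (x', y')" for x y x' y'
  proof
    assume "cross x y = cross x' y'"
    moreover have "(w1\<^sup>2 + w2\<^sup>2) * (x - x')
        = w1 * ((w1 * x + w2 * y) - (w1 * x' + w2 * y')) - w2 * (cross x y - cross x' y')"
      "(w1\<^sup>2 + w2\<^sup>2) * (y - y')
        = w2 * ((w1 * x + w2 * y) - (w1 * x' + w2 * y')) + w1 * (cross x y - cross x' y')"
      unfolding cross_def by algebra+
    ultimately have "(w1\<^sup>2 + w2\<^sup>2) * (x - x') = 0" "(w1\<^sup>2 + w2\<^sup>2) * (y - y') = 0"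
      using that(1,2) by simp_all
    with w_pos that(3) show False by (simp only: mult_eq_0_iff) auto
  qed
  have "(cross x1 y1)\<^sup>2 = (cross x2 y2)\<^sup>2" "(cross x1 y1)\<^sup>2 = (cross x3 y3)\<^sup>2"
    using cross_sq on_circle on_line by simp_all
  then have "cross x1 y1 = cross x2 y2 \<or> cross x1 y1 = cross x3 y3 \<or> cross x2 y2 = cross x3 y3"
    unfolding power2_eq_iff by linarith
  with cross_inj on_line distinct show False by blast
qed

lemma cos_sin_neq_if_not_2pi_multiple:
  assumes "\<forall>n::int. a - b \<noteq> 2 * of_int n * pi"
  shows "(cos a, sin a) \<noteq> (cos b, sin b)"
proof
  assume "(cos a, sin a) = (cos b, sin b)"
  then have "cos (a - b) = 1"
    by (simp add: cos_diff)
  with assms show False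
    by (metis cos_one_2pi_int mult.commute mult.left_commute)
qed

lemma scale_fixed_inside_unit_disc:
  fixes c r :: real
  assumes "c > 0" "r < 1" "c\<^sup>2 * r < 1" "c\<^sup>2 * r + 1 = c * (r + 1)"
  shows "c = 1"
proof -
  have "(c - 1) * (c * r - 1) = 0"
    using assms(4) by (simp add: algebra_simps power2_eq_square)
  moreover have "c * r \<noteq> 1"
  proof
    assume "c * r = 1"
    moreover have "c * r < c"
      using assms(1,2) by simp
    ultimately have "c > 1" by simp
    with \<open>c * r = 1\<close> assms(3) show False
      by (simp add: power2_eq_square mult.assoc)
  qed
  ultimately show ?thesis by simp
qed

theorem theorem1:
  fixes \<phi>1 \<phi>2 \<phi>3 R :: real
  assumes "\<forall>n::int. \<phi>1 - \<phi>2 \<noteq> 2 * of_int n * pi"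
      and "\<forall>n::int. \<phi>1 - \<phi>3 \<noteq> 2 * of_int n * pi"
      and "\<forall>n::int. \<phi>2 - \<phi>3 \<noteq> 2 * of_int n * pi"
      and "0 < R" and "R < 1"
  shows "inj_on (\<lambda>(A, b1, b2). data_map \<phi>1 \<phi>2 \<phi>3 A b1 b2)
           {(A, b1, b2). A > 0 \<and> b1\<^sup>2 + b2\<^sup>2 \<le> R}"
proof (rule inj_onI, clarsimp)
  fix A b1 b2 A' b1' b2' :: real
  assume "A > 0" "b1\<^sup>2 + b2\<^sup>2 \<le> R" "A' > 0" "b1'\<^sup>2 + b2'\<^sup>2 \<le> R"
    and data: "data_map \<phi>1 \<phi>2 \<phi>3 A b1 b2 = data_map \<phi>1 \<phi>2 \<phi>3 A' b1' b2'"
  with \<open>R < 1\<close> have inside: "b1\<^sup>2 + b2\<^sup>2 < 1" "b1'\<^sup>2 + b2'\<^sup>2 < 1" by auto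
  define c where "c = sqrt (A' / A)"
  define t where "t = ((b1'\<^sup>2 + b2'\<^sup>2 + 1) - c * (b1\<^sup>2 + b2\<^sup>2 + 1)) / 2"
  have on_line: "(b1' - c * b1) * cos \<phi> + (b2' - c * b2) * sin \<phi> = t"
    if "A * Kfun b1 b2 \<phi> = A' * Kfun b1' b2' \<phi>" for \<phi>
    using sqdist_boundary_proportional_imp_line
      data_eq_imp_sqdist_boundary_proportional[OF \<open>A > 0\<close> \<open>A' > 0\<close> inside that]
    unfolding c_def t_def by blast
  have data_eq: "A * Kfun b1 b2 \<phi>1 = A' * Kfun b1' b2' \<phi>1" "A * Kfun b1 b2 \<phi>2 = A' * Kfun b1' b2' \<phi>2"
    "A * Kfun b1 b2 \<phi>3 = A' * Kfun b1' b2' \<phi>3"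
    using data by (simp_all add: data_map_def)
  have linear_part: "b1' - c * b1 = 0 \<and> b2' - c * b2 = 0"
    by (rule unit_circle_line_three_points[OF sin_cos_squared_add2 sin_cos_squared_add2
          sin_cos_squared_add2 on_line[OF data_eq(1)] on_line[OF data_eq(2)] on_line[OF data_eq(3)]
          cos_sin_neq_if_not_2pi_multiple[OF assms(1)] cos_sin_neq_if_not_2pi_multiple[OF assms(2)]
          cos_sin_neq_if_not_2pi_multiple[OF assms(3)]])
  then have b': "b1' = c * b1" "b2' = c * b2"
    by simp_all
  then have norm_b': "b1'\<^sup>2 + b2'\<^sup>2 = c\<^sup>2 * (b1\<^sup>2 + b2\<^sup>2)"
    by (simp add: power_mult_distrib algebra_simps)
  have "t = 0"
    using on_line[OF data_eq(1)] linear_part by simp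
  with norm_b' have "c\<^sup>2 * (b1\<^sup>2 + b2\<^sup>2) + 1 = c * (b1\<^sup>2 + b2\<^sup>2 + 1)"
    by (simp add: t_def)
  moreover have "c > 0"
    using \<open>A > 0\<close> \<open>A' > 0\<close> by (simp add: c_def)
  ultimately have "c = 1"
    using inside norm_b' by (intro scale_fixed_inside_unit_disc[where r = "b1\<^sup>2 + b2\<^sup>2"]) auto
  with b' \<open>A > 0\<close> show "A = A' \<and> b1 = b1' \<and> b2 = b2'"
    by (simp add: c_def)
qed

end
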